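(* Let $M$ be a manifold, $T$ a standard Borel space and $\Lambda$ a ($\sigma$-finite) measure on $T$, and let $M\times T$ be the product measurable lamination with leaves $M\times\{t\}$, with $\Lambda$ regarded as a transverse invariant measure. Then $\mathrm{Cat}(M\times T,\Lambda)=\mathrm{Cat}(M)\cdot\Lambda(T)$, where $\mathrm{Cat}(M)$ is the classical LS category of $M$.
   Context: $M\times T$ has the product $\sigma$-algebra and the product of the topology of $M$ with the discrete topology of $T$. A transverse invariant measure assigns to each transversal (measurable set meeting each leaf countably) a value, $\sigma$-additively and invariantly under measurable holonomy transformations; $\Lambda$ on $T$ induces one. $\widetilde\Lambda$ is its coherent extension (on $M\times T$, $\widetilde\Lambda(E)=\int_T\#(E\cap(M\times\{t\}))\,d\Lambda(t)$ for sets with $\sigma$-compact leaf intersections). For measurable open $U$, $\tau_\Lambda(U)=\inf\widetilde\Lambda(H(U\times\{1\}))$ over MT-maps (measurable, leafwise continuous) $H:U\times\mathbb{R}\to M\times T$ with $H(\cdot,0)$ the inclusion; $\mathrm{Cat}(M\times T,\Lambda)=\inf\sum_{U\in\mathcal{U}}\tau_\Lambda(U)$ over countable covers $\mathcal{U}$ by measurable open sets. *)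

theory Defs
  imports "HOL-Analysis.Analysis" "HOL-Probability.Probability"
begin

definition manifold :: "'a topology \<Rightarrow> bool" where
  "manifold X \<longleftrightarrow> Hausdorff_space X \<and> second_countable X \<and>
     (\<exists>n::nat. \<forall>x\<in>topspace X. \<exists>U V. openin X U \<and> x \<in> U \<and>
         openin (Euclidean_space n) V \<and>
         subtopology X U homeomorphic_space subtopology (Euclidean_space n) V)"

definition borel_of :: "'a topology \<Rightarrow> 'a measure" where
  "borel_of X = sigma (topspace X) {U. openin X U}"

definition standard_borel :: "'a measure \<Rightarrow> bool" where
  "standard_borel T \<longleftrightarrow> (\<exists>\<tau>. completely_metrizable_space \<tau> \<and> separable_space \<tau> \<and>
      topspace \<tau> = space T \<and> sets (borel_of \<tau>) = sets T)"

definition contractible_in :: "'a topology \<Rightarrow> 'a set \<Rightarrow> bool" where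
  "contractible_in X U \<longleftrightarrow> U \<subseteq> topspace X \<and>
     (\<exists>c\<in>topspace X. homotopic_with (\<lambda>_. True) (subtopology X U) X id (\<lambda>_. c))"

definition LS_cat :: "'a topology \<Rightarrow> ennreal" where
  "LS_cat X = (INF \<U> \<in> {\<U>. finite \<U> \<and> (\<forall>U\<in>\<U>. openin X U \<and> contractible_in X U)
                          \<and> \<Union>\<U> = topspace X}. of_nat (card \<U>))"

definition prod_lam_meas :: "'a topology \<Rightarrow> 'b measure \<Rightarrow> ('a \<times> 'b) measure" where
  "prod_lam_meas X \<Lambda> = borel_of X \<Otimes>\<^sub>M \<Lambda>"

definition prod_lam_top :: "'a topology \<Rightarrow> 'b measure \<Rightarrow> ('a \<times> 'b) topology" where
  "prod_lam_top X \<Lambda> = prod_topology X (discrete_topology (space \<Lambda>))"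

definition meas_open :: "'a topology \<Rightarrow> 'b measure \<Rightarrow> ('a \<times> 'b) set \<Rightarrow> bool" where
  "meas_open X \<Lambda> U \<longleftrightarrow> U \<in> sets (prod_lam_meas X \<Lambda>) \<and> openin (prod_lam_top X \<Lambda>) U"

definition leaf_count :: "('a \<times> 'b) set \<Rightarrow> 'b \<Rightarrow> ennreal" where
  "leaf_count E t = (if finite {x. (x, t) \<in> E} then of_nat (card {x. (x, t) \<in> E}) else \<infinity>)"

definition coh_ext :: "'b measure \<Rightarrow> ('a \<times> 'b) set \<Rightarrow> ennreal" where
  "coh_ext \<Lambda> E = (\<integral>\<^sup>+ t. leaf_count E t \<partial>\<Lambda>)"

definition MT_deformation ::
  "'a topology \<Rightarrow> 'b measure \<Rightarrow> ('a \<times> 'b) set \<Rightarrow> (('a \<times> 'b) \<times> real \<Rightarrow> 'a \<times> 'b) \<Rightarrow> bool" where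
  "MT_deformation X \<Lambda> U H \<longleftrightarrow>
     H \<in> measurable (restrict_space (prod_lam_meas X \<Lambda>) U \<Otimes>\<^sub>M borel) (prod_lam_meas X \<Lambda>) \<and>
     (\<forall>t\<in>space \<Lambda>. continuous_map
          (prod_topology (subtopology X {x. (x, t) \<in> U}) euclideanreal) (prod_lam_top X \<Lambda>)
          (\<lambda>(x, s). H ((x, t), s))) \<and>
     (\<forall>p\<in>U. H (p, 0) = p)"

definition tau_Lambda :: "'a topology \<Rightarrow> 'b measure \<Rightarrow> ('a \<times> 'b) set \<Rightarrow> ennreal" where
  "tau_Lambda X \<Lambda> U = (INF H \<in> {H. MT_deformation X \<Lambda> U H}. coh_ext \<Lambda> (H ` (U \<times> {1})))"

definition Cat_lam :: "'a topology \<Rightarrow> 'b measure \<Rightarrow> ennreal" where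
  "Cat_lam X \<Lambda> = (INF \<U> \<in> {\<U>. countable \<U> \<and> (\<forall>U\<in>\<U>. meas_open X \<Lambda> U)
                          \<and> \<Union>\<U> = topspace (prod_lam_top X \<Lambda>)}.
                      (\<Sum>\<^sub>\<infinity>U\<in>\<U>. tau_Lambda X \<Lambda> U))"

end

theory Submission
  imports Defs
begin

text \<open>
  Upper bound: if k open sets contractible in M cover M, the k boxes V \<times> T cover M \<times> T, and a
  contraction of V, clamped to the time interval [0, 1], is an MT-deformation of V \<times> T whose
  time-1 image meets every leaf in a single point; hence each box has \<tau>(V \<times> T) \<le> \<Lambda>(T).

  Lower bound: fix a dense sequence e in M, a countable cover of M \<times> T by measurable open sets U
  and MT-deformations H(U). On the leaf through t let S(U, t) be the set of time-1 endpoints of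
  those sample points e n that lie in U. If S(U, t) is finite, continuity of H(U) and density of e
  force every endpoint of the slice of U into S(U, t); so the fibres over the points of S(U, t) are
  open, they are contracted by H(U), and Cat(M) \<le> \<Sum>U. #S(U, t). Counting each endpoint at its
  first sample point makes #S(U, t) a measurable function of t, bounded by the number of points
  of H(U)(U \<times> {1}) on the leaf; integrating over T gives Cat(M) \<Lambda>(T) \<le> \<Sum>U. \<tau>(U).
\<close>

section \<open>Borel \<sigma>-algebras of topologies\<close>

lemma space_borel_of [simp]: "space (borel_of X) = topspace X"
  unfolding borel_of_def by (rule space_measure_of) (auto dest: openin_subset)

lemma openin_in_sets_borel_of: "openin X U \<Longrightarrow> U \<in> sets (borel_of X)"
  unfolding borel_of_def by (subst sets_measure_of) (auto intro: sigma_sets.Basic dest: openin_subset)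

lemma borel_of_euclidean: "borel_of (euclidean :: 'a::topological_space topology) = borel"
  by (simp add: borel_of_def borel_def)

lemma second_countable_euclidean:
  "second_countable (euclidean :: 'a::second_countable_topology topology)"
proof -
  obtain \<B> :: "'a set set" where \<B>: "countable \<B>" "\<And>C. C \<in> \<B> \<Longrightarrow> open C"
      "\<And>S. open S \<Longrightarrow> \<exists>U. U \<subseteq> \<B> \<and> S = \<Union>U"
    using univ_second_countable by blast
  have "\<exists>V\<in>\<B>. x \<in> V \<and> V \<subseteq> S" if "open S" "x \<in> S" for S x
    using \<B>(3)[OF \<open>open S\<close>] \<open>x \<in> S\<close> by blast
  with \<B>(1,2) show ?thesis
    unfolding second_countable_def by (intro exI[of _ \<B>] conjI) auto
qed

lemma openin_prod_topology_in_sets_pair_measure: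
  assumes X: "second_countable X" and Y: "second_countable Y"
    and W: "openin (prod_topology X Y) W"
  shows "W \<in> sets (borel_of X \<Otimes>\<^sub>M borel_of Y)"
proof -
  obtain \<B>X where \<B>X: "countable \<B>X" "\<forall>V\<in>\<B>X. openin X V"
      "\<forall>U x. openin X U \<and> x \<in> U \<longrightarrow> (\<exists>V\<in>\<B>X. x \<in> V \<and> V \<subseteq> U)"
    using X unfolding second_countable_def by blast
  obtain \<B>Y where \<B>Y: "countable \<B>Y" "\<forall>V\<in>\<B>Y. openin Y V"
      "\<forall>U x. openin Y U \<and> x \<in> U \<longrightarrow> (\<exists>V\<in>\<B>Y. x \<in> V \<and> V \<subseteq> U)"
    using Y unfolding second_countable_def by blast
  define K where "K = {(A, B). A \<in> \<B>X \<and> B \<in> \<B>Y \<and> A \<times> B \<subseteq> W}"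
  have "countable K"
    by (rule countable_subset[of _ "\<B>X \<times> \<B>Y"]) (use \<B>X(1) \<B>Y(1) in \<open>auto simp: K_def\<close>)
  have "W \<subseteq> (\<Union>(A, B)\<in>K. A \<times> B)"
  proof
    fix p assume "p \<in> W"
    then obtain U V where UV: "openin X U" "openin Y V" "fst p \<in> U" "snd p \<in> V" "U \<times> V \<subseteq> W"
      using W unfolding openin_prod_topology_alt by (metis prod.collapse)
    then obtain A B where "A \<in> \<B>X" "fst p \<in> A" "A \<subseteq> U" "B \<in> \<B>Y" "snd p \<in> B" "B \<subseteq> V"
      using \<B>X(3) \<B>Y(3) by meson
    with UV(5) show "p \<in> (\<Union>(A, B)\<in>K. A \<times> B)"
      unfolding K_def by (intro UN_I[of "(A, B)"]) (auto simp: mem_Times_iff)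
  qed
  then have "W = (\<Union>(A, B)\<in>K. A \<times> B)"
    unfolding K_def by auto
  also have "\<dots> \<in> sets (borel_of X \<Otimes>\<^sub>M borel_of Y)"
    using \<open>countable K\<close> \<B>X(2) \<B>Y(2)
    by (intro sets.countable_UN') (auto simp: K_def intro!: pair_measureI openin_in_sets_borel_of)
  finally show ?thesis .
qed

lemma continuous_map_measurable_pair_borel_of:
  assumes "second_countable X" "second_countable Y"
    and f: "continuous_map (prod_topology X Y) Z f"
  shows "f \<in> borel_of X \<Otimes>\<^sub>M borel_of Y \<rightarrow>\<^sub>M borel_of Z"
  unfolding borel_of_def[of Z]
proof (rule measurable_measure_of)
  show "f \<in> space (borel_of X \<Otimes>\<^sub>M borel_of Y) \<rightarrow> topspace Z"
    using f by (auto simp: continuous_map_def space_pair_measure)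
  fix A assume "A \<in> {U. openin Z U}"
  then have "openin (prod_topology X Y) {p \<in> topspace (prod_topology X Y). f p \<in> A}"
    using f openin_continuous_map_preimage by blast
  moreover have "f -` A \<inter> space (borel_of X \<Otimes>\<^sub>M borel_of Y) = {p \<in> topspace (prod_topology X Y). f p \<in> A}"
    by (auto simp: space_pair_measure)
  ultimately show "f -` A \<inter> space (borel_of X \<Otimes>\<^sub>M borel_of Y) \<in> sets (borel_of X \<Otimes>\<^sub>M borel_of Y)"
    using openin_prod_topology_in_sets_pair_measure[OF assms(1,2)] by simp
qed (auto dest: openin_subset)

section \<open>Countable sums in ennreal\<close>

lemma infsum_ennreal_eq_SUP:
  "(\<Sum>\<^sub>\<infinity>x\<in>A. (f x :: ennreal)) = (SUP F\<in>{F. finite F \<and> F \<subseteq> A}. sum f F)"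
  by (rule nonneg_infsum_complete) simp

lemma sum_le_infsum_ennreal:
  assumes "finite F" "F \<subseteq> A"
  shows "sum f F \<le> (\<Sum>\<^sub>\<infinity>x\<in>A. (f x :: ennreal))"
  unfolding infsum_ennreal_eq_SUP using assms by (intro SUP_upper) auto

lemma infsum_mono_set_ennreal:
  assumes "B \<subseteq> A"
  shows "(\<Sum>\<^sub>\<infinity>x\<in>B. (f x :: ennreal)) \<le> (\<Sum>\<^sub>\<infinity>x\<in>A. f x)"
  unfolding infsum_ennreal_eq_SUP using assms by (intro SUP_subset_mono) auto

lemma infsum_UNIV_eq_suminf_ennreal:
  "(\<Sum>\<^sub>\<infinity>n\<in>(UNIV::nat set). (f n :: ennreal)) = (\<Sum>n. f n)"
proof (rule antisym)
  show "(\<Sum>\<^sub>\<infinity>n\<in>UNIV. f n) \<le> (\<Sum>n. f n)"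
    unfolding infsum_ennreal_eq_SUP
  proof (rule SUP_least)
    fix F :: "nat set" assume "F \<in> {F. finite F \<and> F \<subseteq> UNIV}"
    then have "finite F" by simp
    then have "sum f F \<le> sum f {..Max (insert 0 F)}"
      by (intro sum_mono2) auto
    also have "\<dots> \<le> (\<Sum>n. f n)"
      using sum_le_suminf[of f "{..Max (insert 0 F)}"] by simp
    finally show "sum f F \<le> (\<Sum>n. f n)" .
  qed
  show "(\<Sum>n. f n) \<le> (\<Sum>\<^sub>\<infinity>n\<in>UNIV. f n)"
    unfolding suminf_eq_SUP by (rule SUP_least) (rule sum_le_infsum_ennreal, auto)
qed

lemma infsum_countable_eq_suminf_ennreal:
  assumes "countable A" "infinite A"
  shows "(\<Sum>\<^sub>\<infinity>a\<in>A. (f a :: ennreal)) = (\<Sum>n. f (from_nat_into A n))"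
  using infsum_reindex_bij_betw[OF bij_betw_from_nat_into[OF assms], of f]
  by (simp add: infsum_UNIV_eq_suminf_ennreal)

lemma nn_integral_infsum:
  assumes "countable A" and f: "\<And>a. a \<in> A \<Longrightarrow> f a \<in> borel_measurable M"
  shows "(\<integral>\<^sup>+ x. (\<Sum>\<^sub>\<infinity>a\<in>A. f a x) \<partial>M) = (\<Sum>\<^sub>\<infinity>a\<in>A. (\<integral>\<^sup>+ x. f a x \<partial>M))"
proof (cases "finite A")
  case True
  then show ?thesis using f by (simp add: infsum_finite nn_integral_sum)
next
  case False
  note sum_eq = infsum_countable_eq_suminf_ennreal[OF \<open>countable A\<close> False]
  have "from_nat_into A n \<in> A" for n
    using False by (intro from_nat_into) auto
  then have "(\<integral>\<^sup>+ x. (\<Sum>n. f (from_nat_into A n) x) \<partial>M) = (\<Sum>n. \<integral>\<^sup>+ x. f (from_nat_into A n) x \<partial>M)"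
    using f by (intro nn_integral_suminf) auto
  then show ?thesis
    by (simp only: sum_eq)
qed

lemma infsum_geometric_weights_le:
  assumes "countable A" "0 \<le> \<epsilon>"
  shows "(\<Sum>\<^sub>\<infinity>a\<in>A. ennreal (\<epsilon> * (1/2) ^ Suc (to_nat_on A a))) \<le> ennreal \<epsilon>"
proof -
  let ?w = "\<lambda>n. \<epsilon> * (1/2) ^ Suc n"
  have sums: "?w sums \<epsilon>"
    using sums_mult[OF power_half_series, of \<epsilon>] by simp
  have "(\<Sum>\<^sub>\<infinity>a\<in>A. ennreal (?w (to_nat_on A a))) = (\<Sum>\<^sub>\<infinity>n\<in>to_nat_on A ` A. ennreal (?w n))"
    using infsum_reindex[OF inj_on_to_nat_on[OF assms(1)], of "\<lambda>n. ennreal (?w n)"]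
    unfolding comp_def by (rule sym)
  also have "\<dots> \<le> (\<Sum>\<^sub>\<infinity>n\<in>UNIV. ennreal (?w n))"
    by (rule infsum_mono_set_ennreal) simp
  also have "\<dots> = (\<Sum>n. ennreal (?w n))"
    by (rule infsum_UNIV_eq_suminf_ennreal)
  also have "\<dots> = ennreal (\<Sum>n. ?w n)"
    using assms(2) sums_summable[OF sums] by (intro suminf_ennreal2) auto
  also have "(\<Sum>n. ?w n) = \<epsilon>"
    using sums by (rule sums_unique[symmetric])
  finally show ?thesis .
qed

lemma le_infsum_INF_ennreal:
  fixes f :: "'i \<Rightarrow> 'j \<Rightarrow> ennreal"
  assumes "countable A"
    and choice: "\<And>h. (\<And>i. i \<in> A \<Longrightarrow> h i \<in> S i) \<Longrightarrow> c \<le> (\<Sum>\<^sub>\<infinity>i\<in>A. f i (h i))"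
  shows "c \<le> (\<Sum>\<^sub>\<infinity>i\<in>A. INF j\<in>S i. f i j)"
proof (rule ennreal_le_epsilon)
  fix \<epsilon> :: real assume fin: "(\<Sum>\<^sub>\<infinity>i\<in>A. INF j\<in>S i. f i j) < \<top>" and "0 < \<epsilon>"
  define \<delta> where "\<delta> i = ennreal (\<epsilon> * (1/2) ^ Suc (to_nat_on A i))" for i
  have "\<exists>j\<in>S i. f i j < (INF j\<in>S i. f i j) + \<delta> i" if "i \<in> A" for i
  proof -
    have "(INF j\<in>S i. f i j) \<le> (\<Sum>\<^sub>\<infinity>i\<in>A. INF j\<in>S i. f i j)"
      using sum_le_infsum_ennreal[of "{i}" A "\<lambda>i. INF j\<in>S i. f i j"] that by simp
    then have "(INF j\<in>S i. f i j) < \<top>"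
      using fin by (rule le_less_trans)
    moreover have "0 < \<delta> i"
      using \<open>0 < \<epsilon>\<close> by (simp add: \<delta>_def)
    ultimately have "(INF j\<in>S i. f i j) + 0 < (INF j\<in>S i. f i j) + \<delta> i"
      by (simp only: ennreal_add_left_cancel_less infinity_ennreal_def less_top)
    then show ?thesis
      by (simp add: INF_less_iff)
  qed
  then obtain h where h: "\<And>i. i \<in> A \<Longrightarrow> h i \<in> S i \<and> f i (h i) < (INF j\<in>S i. f i j) + \<delta> i"
    by metis
  have "c \<le> (\<Sum>\<^sub>\<infinity>i\<in>A. f i (h i))"
    using h by (intro choice) blast
  also have "\<dots> \<le> (\<Sum>\<^sub>\<infinity>i\<in>A. (INF j\<in>S i. f i j) + \<delta> i)"
    by (rule infsum_mono) (use h in \<open>auto intro: less_imp_le simp: nonneg_summable_on_complete\<close>)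
  also have "\<dots> = (\<Sum>\<^sub>\<infinity>i\<in>A. INF j\<in>S i. f i j) + (\<Sum>\<^sub>\<infinity>i\<in>A. \<delta> i)"
    by (rule infsum_add) (auto simp: nonneg_summable_on_complete)
  also have "(\<Sum>\<^sub>\<infinity>i\<in>A. \<delta> i) \<le> ennreal \<epsilon>"
    unfolding \<delta>_def using \<open>countable A\<close> \<open>0 < \<epsilon>\<close> by (intro infsum_geometric_weights_le) auto
  finally show "c \<le> (\<Sum>\<^sub>\<infinity>i\<in>A. INF j\<in>S i. f i j) + ennreal \<epsilon>"
    by (simp add: add_left_mono)
qed

lemma emeasure_count_space_UNIV_eq:
  "emeasure (count_space UNIV) A = (if finite A then of_nat (card A) else \<infinity>)"
  by (rule emeasure_count_space) simp

lemma suminf_indicator_eq_emeasure_count_space: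
  "(\<Sum>n. indicator (E n) t :: ennreal) = emeasure (count_space UNIV) {n. t \<in> E n}"
proof -
  have "(\<Sum>n. indicator (E n) t :: ennreal) = (\<integral>\<^sup>+ n. indicator {n. t \<in> E n} n \<partial>count_space UNIV)"
    by (simp add: nn_integral_count_space_nat indicator_def)
  then show ?thesis
    by simp
qed

lemma emeasure_count_space_bij_betw:
  assumes "bij_betw f A B"
  shows "emeasure (count_space UNIV) A = emeasure (count_space UNIV) B"
  using bij_betw_finite[OF assms] bij_betw_same_card[OF assms]
  by (simp add: emeasure_count_space_UNIV_eq)

lemma bij_betw_first_occurrences:
  fixes f :: "nat \<Rightarrow> 'a"
  shows "bij_betw f {n. P n \<and> (\<forall>m<n. P m \<longrightarrow> f m \<noteq> f n)} (f ` {n. P n})"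
proof (rule bij_betw_imageI)
  show "inj_on f {n. P n \<and> (\<forall>m<n. P m \<longrightarrow> f m \<noteq> f n)}"
  proof (rule inj_onI)
    fix m n assume m: "m \<in> {n. P n \<and> (\<forall>m<n. P m \<longrightarrow> f m \<noteq> f n)}"
      and n: "n \<in> {n. P n \<and> (\<forall>m<n. P m \<longrightarrow> f m \<noteq> f n)}" and "f m = f n"
    show "m = n"
    proof (rule ccontr)
      assume "m \<noteq> n"
      then consider "m < n" | "n < m" by linarith
      then show False
        using m n \<open>f m = f n\<close> by cases auto
    qed
  qed
  show "f ` {n. P n \<and> (\<forall>m<n. P m \<longrightarrow> f m \<noteq> f n)} = f ` {n. P n}"
  proof (intro equalityI subsetI)
    fix y assume "y \<in> f ` {n. P n}"
    then obtain k where "P k" "y = f k" by blast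
    define n where "n = (LEAST n. P n \<and> f n = y)"
    have n: "P n \<and> f n = y"
      unfolding n_def by (rule LeastI[of _ k]) (use \<open>P k\<close> \<open>y = f k\<close> in simp)
    have "\<not> (P m \<and> f m = y)" if "m < n" for m
      using not_less_Least[OF that[unfolded n_def]] .
    with n show "y \<in> f ` {n. P n \<and> (\<forall>m<n. P m \<longrightarrow> f m \<noteq> f n)}"
      by (intro image_eqI[of y f n]) auto
  qed auto
qed

section \<open>MT-deformations of the product lamination\<close>

lemma topspace_prod_lam_top [simp]: "topspace (prod_lam_top X \<Lambda>) = topspace X \<times> space \<Lambda>"
  by (simp add: prod_lam_top_def)

lemma meas_open_Times:
  assumes "openin X V"
  shows "meas_open X \<Lambda> (V \<times> space \<Lambda>)"
  unfolding meas_open_def prod_lam_meas_def prod_lam_top_def using assms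
  by (auto intro!: pair_measureI openin_in_sets_borel_of simp: openin_prod_Times_iff openin_discrete_topology)

lemma openin_leaf_slice:
  assumes U: "openin (prod_lam_top X \<Lambda>) U" and t: "t \<in> space \<Lambda>"
  shows "openin X {x. (x, t) \<in> U}"
proof -
  have "continuous_map X (prod_lam_top X \<Lambda>) (\<lambda>x. (x, t))"
    unfolding prod_lam_top_def using t by (intro continuous_map_pairedI) auto
  then have "openin X {x \<in> topspace X. (x, t) \<in> U}"
    using U by (rule openin_continuous_map_preimage)
  moreover have "{x \<in> topspace X. (x, t) \<in> U} = {x. (x, t) \<in> U}"
    using openin_subset[OF U] by auto
  ultimately show ?thesis
    by simp
qed

lemma sets_leaf_section:
  assumes U: "U \<in> sets (prod_lam_meas X \<Lambda>)" and x: "x \<in> topspace X"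
  shows "{t \<in> space \<Lambda>. (x, t) \<in> U} \<in> sets \<Lambda>"
proof -
  have "Pair x \<in> \<Lambda> \<rightarrow>\<^sub>M borel_of X \<Otimes>\<^sub>M \<Lambda>"
    by (rule measurable_Pair1') (simp add: x)
  from measurable_sets[OF this, of U] have "Pair x -` U \<inter> space \<Lambda> \<in> sets \<Lambda>"
    using U by (simp add: prod_lam_meas_def)
  moreover have "Pair x -` U \<inter> space \<Lambda> = {t \<in> space \<Lambda>. (x, t) \<in> U}"
    by auto
  ultimately show ?thesis
    by simp
qed

lemma continuous_map_MT_deformation:
  assumes "MT_deformation X \<Lambda> U H" and "t \<in> space \<Lambda>"
  shows "continuous_map (prod_topology (subtopology X {x. (x, t) \<in> U}) euclideanreal) (prod_lam_top X \<Lambda>)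
           (\<lambda>(x, s). H ((x, t), s))"
  using assms unfolding MT_deformation_def by blast

lemma MT_deformation_at_0: "MT_deformation X \<Lambda> U H \<Longrightarrow> p \<in> U \<Longrightarrow> H (p, 0) = p"
  unfolding MT_deformation_def by blast

lemma MT_deformation_snd:
  assumes H: "MT_deformation X \<Lambda> U H" and U: "openin (prod_lam_top X \<Lambda>) U"
    and xt: "(x, t) \<in> U" and t: "t \<in> space \<Lambda>"
  shows "snd (H ((x, t), s)) = t"
proof -
  let ?Ut = "{x. (x, t) \<in> U}"
  have "continuous_map euclideanreal (prod_topology (subtopology X ?Ut) euclideanreal) (\<lambda>s. (x, s))"
    using xt openin_subset[OF U] continuous_map_id[unfolded id_def]
    by (intro continuous_map_pairedI) auto
  from continuous_map_compose[OF this continuous_map_MT_deformation[OF H t]]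
  have "continuous_map euclideanreal (prod_lam_top X \<Lambda>) (\<lambda>s. H ((x, t), s))"
    by (simp add: o_def)
  from continuous_map_compose[OF this[unfolded prod_lam_top_def] continuous_map_snd]
  have "continuous_map euclideanreal (discrete_topology (space \<Lambda>)) (\<lambda>s. snd (H ((x, t), s)))"
    by (simp add: o_def)
  \<comment> \<open>a continuous map from the connected line into a discrete space is constant\<close>
  then have "connectedin (discrete_topology (space \<Lambda>)) ((\<lambda>s. snd (H ((x, t), s))) ` topspace euclideanreal)"
    by (rule connectedin_continuous_map_image) simp
  then obtain a where a: "range (\<lambda>s. snd (H ((x, t), s))) \<subseteq> {a}"
    by (auto simp: connectedin_discrete_topology)
  have "snd (H ((x, t), s)) = a" "snd (H ((x, t), 0)) = a"
    using a by auto
  moreover have "snd (H ((x, t), 0)) = t"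
    using MT_deformation_at_0[OF H xt] by simp
  ultimately show ?thesis
    by simp
qed

lemma continuous_map_MT_deformation_fst:
  assumes H: "MT_deformation X \<Lambda> U H" and t: "t \<in> space \<Lambda>"
  shows "continuous_map (prod_topology (subtopology X {x. (x, t) \<in> U}) euclideanreal) X
           (\<lambda>(x, s). fst (H ((x, t), s)))"
proof -
  have "continuous_map (prod_topology (subtopology X {x. (x, t) \<in> U}) euclideanreal) X
           (fst \<circ> (\<lambda>(x, s). H ((x, t), s)))"
    using continuous_map_compose[OF continuous_map_MT_deformation[OF H t, unfolded prod_lam_top_def]
        continuous_map_fst] .
  moreover have "fst \<circ> (\<lambda>(x, s). H ((x, t), s)) = (\<lambda>(x, s). fst (H ((x, t), s)))"
    by (auto simp: fun_eq_iff)
  ultimately show ?thesis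
    by simp
qed

lemma continuous_map_MT_deformation_at:
  assumes H: "MT_deformation X \<Lambda> U H" and t: "t \<in> space \<Lambda>"
  shows "continuous_map (subtopology X {x. (x, t) \<in> U}) X (\<lambda>x. fst (H ((x, t), r)))"
proof -
  have "continuous_map (subtopology X {x. (x, t) \<in> U})
          (prod_topology (subtopology X {x. (x, t) \<in> U}) euclideanreal) (\<lambda>x. (x, r))"
    using continuous_map_id[unfolded id_def] by (intro continuous_map_pairedI) auto
  from continuous_map_compose[OF this continuous_map_MT_deformation_fst[OF H t]] show ?thesis
    by (simp add: o_def)
qed

lemma measurable_MT_deformation_at:
  assumes H: "MT_deformation X \<Lambda> U H" and x: "x \<in> topspace X"
  shows "(\<lambda>t. fst (H ((x, t), r))) \<in> restrict_space \<Lambda> {t \<in> space \<Lambda>. (x, t) \<in> U} \<rightarrow>\<^sub>M borel_of X"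
proof -
  have "Pair x \<in> restrict_space \<Lambda> {t \<in> space \<Lambda>. (x, t) \<in> U} \<rightarrow>\<^sub>M restrict_space (prod_lam_meas X \<Lambda>) U"
    unfolding prod_lam_meas_def
    by (rule measurable_restrict_space3[OF measurable_Pair1']) (auto simp: x)
  then have "(\<lambda>t. ((x, t), r)) \<in> restrict_space \<Lambda> {t \<in> space \<Lambda>. (x, t) \<in> U} \<rightarrow>\<^sub>M
      restrict_space (prod_lam_meas X \<Lambda>) U \<Otimes>\<^sub>M borel"
    by (rule measurable_Pair) simp
  moreover have "H \<in> restrict_space (prod_lam_meas X \<Lambda>) U \<Otimes>\<^sub>M borel \<rightarrow>\<^sub>M prod_lam_meas X \<Lambda>"
    using H unfolding MT_deformation_def by blast
  moreover have "fst \<in> prod_lam_meas X \<Lambda> \<rightarrow>\<^sub>M borel_of X"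
    unfolding prod_lam_meas_def by (rule measurable_fst)
  ultimately show ?thesis
    using measurable_comp[OF measurable_comp] by (simp add: o_def)
qed

lemma openin_off_diagonal:
  assumes "Hausdorff_space X"
  shows "openin (prod_topology X X) {p \<in> topspace X \<times> topspace X. fst p \<noteq> snd p}"
  unfolding openin_prod_topology_alt
proof (intro allI impI)
  fix x y assume "(x, y) \<in> {p \<in> topspace X \<times> topspace X. fst p \<noteq> snd p}"
  then have "x \<in> topspace X" "y \<in> topspace X" "x \<noteq> y"
    by auto
  then obtain U V where UV: "openin X U" "openin X V" "x \<in> U" "y \<in> V" "disjnt U V"
    using assms unfolding Hausdorff_space_def by blast
  have "U \<times> V \<subseteq> {p \<in> topspace X \<times> topspace X. fst p \<noteq> snd p}"
    using UV openin_subset[OF UV(1)] openin_subset[OF UV(2)] by (auto simp: disjnt_def)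
  then show "\<exists>U V. openin X U \<and> openin X V \<and> x \<in> U \<and> y \<in> V \<and>
      U \<times> V \<subseteq> {p \<in> topspace X \<times> topspace X. fst p \<noteq> snd p}"
    using UV by blast
qed

lemma sets_MT_deformation_neq:
  assumes X: "Hausdorff_space X" "second_countable X"
    and H: "MT_deformation X \<Lambda> U H" and U: "U \<in> sets (prod_lam_meas X \<Lambda>)"
    and x: "x \<in> topspace X" and y: "y \<in> topspace X"
  shows "{t \<in> space \<Lambda>. (x, t) \<in> U \<and> (y, t) \<in> U \<and> fst (H ((x, t), r)) \<noteq> fst (H ((y, t), r))} \<in> sets \<Lambda>"
proof -
  define A where "A = {t \<in> space \<Lambda>. (x, t) \<in> U \<and> (y, t) \<in> U}"
  have "A = {t \<in> space \<Lambda>. (x, t) \<in> U} \<inter> {t \<in> space \<Lambda>. (y, t) \<in> U}"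
    unfolding A_def by auto
  then have A: "A \<in> sets \<Lambda>"
    using sets_leaf_section[OF U x] sets_leaf_section[OF U y] by simp
  define G where "G t = (fst (H ((x, t), r)), fst (H ((y, t), r)))" for t
  have G: "G \<in> restrict_space \<Lambda> A \<rightarrow>\<^sub>M borel_of X \<Otimes>\<^sub>M borel_of X"
    unfolding G_def
    by (rule measurable_Pair; rule measurable_restrict_mono[OF measurable_MT_deformation_at[OF H]]) (auto simp: A_def x y)
  define D where "D = {p \<in> topspace X \<times> topspace X. fst p \<noteq> snd p}"
  have "D \<in> sets (borel_of X \<Otimes>\<^sub>M borel_of X)"
    unfolding D_def using X by (intro openin_prod_topology_in_sets_pair_measure openin_off_diagonal)
  from measurable_sets[OF G this] have "G -` D \<inter> A \<in> sets \<Lambda>"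
    using A sets_restrict_space_iff[of A \<Lambda>] by (auto simp: space_restrict_space A_def)
  moreover have "G t \<in> topspace X \<times> topspace X" if "t \<in> A" for t
    using measurable_space[OF G] that by (auto simp: space_pair_measure space_restrict_space A_def)
  then have "G -` D \<inter> A =
      {t \<in> space \<Lambda>. (x, t) \<in> U \<and> (y, t) \<in> U \<and> fst (H ((x, t), r)) \<noteq> fst (H ((y, t), r))}"
    by (auto simp: A_def G_def D_def)
  ultimately show ?thesis
    by simp
qed

section \<open>Lower bound\<close>

definition sampled_endpoints ::
  "(nat \<Rightarrow> 'a) \<Rightarrow> ('a \<times> 'b) set \<Rightarrow> (('a \<times> 'b) \<times> real \<Rightarrow> 'a \<times> 'b) \<Rightarrow> 'b \<Rightarrow> 'a set" where
  "sampled_endpoints e U H t = (\<lambda>n. fst (H ((e n, t), 1))) ` {n. (e n, t) \<in> U}"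

lemma borel_measurable_count_sampled_endpoints:
  assumes X: "Hausdorff_space X" "second_countable X"
    and H: "MT_deformation X \<Lambda> U H" and U: "U \<in> sets (prod_lam_meas X \<Lambda>)"
    and e: "range e \<subseteq> topspace X"
  shows "(\<lambda>t. emeasure (count_space UNIV) (sampled_endpoints e U H t)) \<in> borel_measurable \<Lambda>"
proof -
  define f where "f t = (\<lambda>n. fst (H ((e n, t), 1)))" for t
  \<comment> \<open>each sampled endpoint is counted once, at the first sample point mapped to it\<close>
  define N where "N n = {t. (e n, t) \<in> U \<and> (\<forall>m<n. (e m, t) \<in> U \<longrightarrow> f t m \<noteq> f t n)}" for n
  have count: "emeasure (count_space UNIV) (sampled_endpoints e U H t) = (\<Sum>n. indicator (N n) t)" for t
  proof -
    have "sampled_endpoints e U H t = f t ` {n. (e n, t) \<in> U}"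
      by (simp add: sampled_endpoints_def f_def)
    moreover have "{n. t \<in> N n} = {n. (e n, t) \<in> U \<and> (\<forall>m<n. (e m, t) \<in> U \<longrightarrow> f t m \<noteq> f t n)}"
      by (simp add: N_def)
    ultimately show ?thesis
      using emeasure_count_space_bij_betw[OF bij_betw_first_occurrences[where P="\<lambda>n. (e n, t) \<in> U" and f="f t"]]
      by (simp add: suminf_indicator_eq_emeasure_count_space)
  qed
  have "{t \<in> space \<Lambda>. t \<in> N n} \<in> sets \<Lambda>" for n
  proof -
    define A where "A m = {t \<in> space \<Lambda>. (e m, t) \<in> U}" for m
    define D where "D m = {t \<in> space \<Lambda>. (e m, t) \<in> U \<and> (e n, t) \<in> U \<and> f t m \<noteq> f t n}" for m
    have e_in: "e m \<in> topspace X" for m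
      using e by auto
    have A: "A m \<in> sets \<Lambda>" for m
      unfolding A_def by (rule sets_leaf_section[OF U e_in])
    have D: "D m \<in> sets \<Lambda>" for m
      unfolding D_def f_def by (rule sets_MT_deformation_neq[OF X H U e_in e_in])
    have "{t \<in> space \<Lambda>. t \<in> N n} = A n - (\<Union>m\<in>{..<n}. (A m \<inter> A n) - D m)"
      unfolding A_def D_def N_def by auto
    then show ?thesis
      using A D by (simp only:) (intro sets.Diff sets.finite_UN; auto)
  qed
  then show ?thesis
    unfolding count by (intro borel_measurable_suminf_order borel_measurable_indicator')
qed

lemma leaf_count_eq_emeasure: "leaf_count E t = emeasure (count_space UNIV) {x. (x, t) \<in> E}"
  by (simp add: leaf_count_def emeasure_count_space_UNIV_eq)

lemma count_sampled_endpoints_le_leaf_count: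
  assumes H: "MT_deformation X \<Lambda> U H" and U: "openin (prod_lam_top X \<Lambda>) U" and t: "t \<in> space \<Lambda>"
  shows "emeasure (count_space UNIV) (sampled_endpoints e U H t) \<le> leaf_count (H ` (U \<times> {1})) t"
proof -
  have "sampled_endpoints e U H t \<subseteq> {x. (x, t) \<in> H ` (U \<times> {1})}"
  proof
    fix y assume "y \<in> sampled_endpoints e U H t"
    then obtain n where n: "(e n, t) \<in> U" "y = fst (H ((e n, t), 1))"
      unfolding sampled_endpoints_def by blast
    then have "H ((e n, t), 1) = (y, t)"
      using MT_deformation_snd[OF H U n(1) t] by (metis prod.collapse)
    then show "y \<in> {x. (x, t) \<in> H ` (U \<times> {1})}"
      using n(1) by (metis (mono_tags, lifting) SigmaI image_eqI mem_Collect_eq singletonI)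
  qed
  then show ?thesis
    unfolding leaf_count_eq_emeasure by (rule emeasure_mono) simp
qed

lemma sampled_endpoints_subset_topspace:
  assumes H: "MT_deformation X \<Lambda> U H" and t: "t \<in> space \<Lambda>" and e: "range e \<subseteq> topspace X"
  shows "sampled_endpoints e U H t \<subseteq> topspace X"
proof -
  have "sampled_endpoints e U H t \<subseteq> (\<lambda>x. fst (H ((x, t), 1))) ` topspace (subtopology X {x. (x, t) \<in> U})"
    using e unfolding sampled_endpoints_def by (auto intro!: image_eqI)
  also have "\<dots> \<subseteq> topspace X"
    by (rule continuous_map_image_subset_topspace[OF continuous_map_MT_deformation_at[OF H t]])
  finally show ?thesis .
qed

lemma MT_endpoint_in_sampled_endpoints:
  assumes "Hausdorff_space X"
    and dense: "X closure_of range e = topspace X" and e: "range e \<subseteq> topspace X"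
    and H: "MT_deformation X \<Lambda> U H" and U: "openin (prod_lam_top X \<Lambda>) U" and t: "t \<in> space \<Lambda>"
    and fin: "finite (sampled_endpoints e U H t)" and xt: "(x, t) \<in> U"
  shows "fst (H ((x, t), 1)) \<in> sampled_endpoints e U H t"
proof (rule ccontr)
  assume notin: "fst (H ((x, t), 1)) \<notin> sampled_endpoints e U H t"
  define f where "f x = fst (H ((x, t), 1))" for x
  define Ut where "Ut = {x. (x, t) \<in> U}"
  have f: "continuous_map (subtopology X Ut) X f"
    unfolding f_def Ut_def by (rule continuous_map_MT_deformation_at[OF H t])
  have "closedin X (sampled_endpoints e U H t)"
    using \<open>Hausdorff_space X\<close> sampled_endpoints_subset_topspace[OF H t e] fin
    by (intro closedin_Hausdorff_finite)
  \<comment> \<open>the points of the slice with unsampled endpoint form an open set containing x, so some e m\<close>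
  define W where "W = {y \<in> topspace (subtopology X Ut). f y \<in> topspace X - sampled_endpoints e U H t}"
  have "openin (subtopology X Ut) W"
    unfolding W_def using \<open>closedin X _\<close> by (intro openin_continuous_map_preimage[OF f]) auto
  then have "openin X W"
    using openin_leaf_slice[OF U t] unfolding Ut_def by (rule openin_trans_full)
  moreover have "x \<in> W"
    using xt notin openin_subset[OF U] continuous_map_image_subset_topspace[OF f]
    unfolding W_def Ut_def f_def by auto
  ultimately obtain m where "e m \<in> W"
    using dense unfolding dense_intersects_open by blast
  then show False
    unfolding W_def Ut_def f_def sampled_endpoints_def by auto
qed

lemma openin_MT_endpoint_fibre:
  assumes "Hausdorff_space X"
    and dense: "X closure_of range e = topspace X" and e: "range e \<subseteq> topspace X"
    and H: "MT_deformation X \<Lambda> U H" and U: "openin (prod_lam_top X \<Lambda>) U" and t: "t \<in> space \<Lambda>"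
    and fin: "finite (sampled_endpoints e U H t)" and p: "p \<in> sampled_endpoints e U H t"
  shows "openin X {x. (x, t) \<in> U \<and> fst (H ((x, t), 1)) = p}"
proof -
  define f where "f x = fst (H ((x, t), 1))" for x
  define Ut where "Ut = {x. (x, t) \<in> U}"
  have f: "continuous_map (subtopology X Ut) X f"
    unfolding f_def Ut_def by (rule continuous_map_MT_deformation_at[OF H t])
  have S: "sampled_endpoints e U H t \<subseteq> topspace X"
    by (rule sampled_endpoints_subset_topspace[OF H t e])
  then have closed: "closedin X (sampled_endpoints e U H t - {p})"
    using \<open>Hausdorff_space X\<close> fin by (intro closedin_Hausdorff_finite) auto
  \<comment> \<open>all endpoints of the slice are sampled, so the fibre over p is the preimage of an open set\<close>
  have fibre: "{x. (x, t) \<in> U \<and> f x = p} =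
      {y \<in> topspace (subtopology X Ut). f y \<in> topspace X - (sampled_endpoints e U H t - {p})}"
    using MT_endpoint_in_sampled_endpoints[OF assms(1-7)] openin_subset[OF U] S p
    unfolding Ut_def f_def by auto
  have "openin (subtopology X Ut) {x. (x, t) \<in> U \<and> f x = p}"
    unfolding fibre by (rule openin_continuous_map_preimage[OF f]) (use closed in auto)
  then show ?thesis
    using openin_leaf_slice[OF U t] unfolding Ut_def f_def by (rule openin_trans_full)
qed

lemma contractible_in_MT_endpoint_fibre:
  assumes H: "MT_deformation X \<Lambda> U H" and U: "openin (prod_lam_top X \<Lambda>) U"
    and t: "t \<in> space \<Lambda>" and p: "p \<in> topspace X"
  shows "contractible_in X {x. (x, t) \<in> U \<and> fst (H ((x, t), 1)) = p}"
proof -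
  define V where "V = {x. (x, t) \<in> U \<and> fst (H ((x, t), 1)) = p}"
  define Ut where "Ut = {x. (x, t) \<in> U}"
  have VUt: "V \<subseteq> Ut"
    unfolding V_def Ut_def by auto
  have VX: "V \<subseteq> topspace X"
    using openin_subset[OF U] unfolding V_def by auto
  define g where "g = (\<lambda>(s::real, x). fst (H ((x, t), s)))"
  have "continuous_map (prod_topology (top_of_set {0..1::real}) (subtopology X V)) X snd"
    using continuous_map_compose[OF continuous_map_snd continuous_map_id_subt] by (simp add: o_def id_def)
  then have "continuous_map (prod_topology (top_of_set {0..1::real}) (subtopology X V)) (subtopology X Ut) snd"
    using VUt by (auto simp: continuous_map_in_subtopology)
  moreover have "continuous_map (prod_topology (top_of_set {0..1::real}) (subtopology X V)) euclideanreal fst"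
    using continuous_map_compose[OF continuous_map_fst continuous_map_id_subt] by (simp add: o_def id_def)
  ultimately have "continuous_map (prod_topology (top_of_set {0..1::real}) (subtopology X V))
      (prod_topology (subtopology X Ut) euclideanreal) (\<lambda>z. (snd z, fst z))"
    by (rule continuous_map_pairedI)
  from continuous_map_compose[OF this continuous_map_MT_deformation_fst[OF H t, folded Ut_def]]
  have "continuous_map (prod_topology (top_of_set {0..1::real}) (subtopology X V)) X g"
    unfolding g_def by (simp add: o_def case_prod_unfold)
  moreover have "g (0, x) = x" if "x \<in> V" for x
    using MT_deformation_at_0[OF H] that unfolding g_def V_def by simp
  moreover have "g (1, x) = p" if "x \<in> V" for x
    using that unfolding g_def V_def by simp
  ultimately have "homotopic_with (\<lambda>_. True) (subtopology X V) X id (\<lambda>_. p)"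
    using VX by (auto simp: homotopic_with intro!: exI[of _ g])
  then show ?thesis
    using VX p unfolding contractible_in_def V_def by blast
qed

lemma LS_cat_le_infsum_card:
  assumes fin: "\<And>i. i \<in> I \<Longrightarrow> finite (\<V> i)"
    and contr: "\<And>i V. i \<in> I \<Longrightarrow> V \<in> \<V> i \<Longrightarrow> openin X V \<and> contractible_in X V"
    and cover: "(\<Union>i\<in>I. \<Union>(\<V> i)) = topspace X"
  shows "LS_cat X \<le> (\<Sum>\<^sub>\<infinity>i\<in>I. of_nat (card (\<V> i)))"
proof (cases "(\<Sum>\<^sub>\<infinity>i\<in>I. of_nat (card (\<V> i)) :: ennreal) = \<infinity>")
  case False
  define J where "J = {i \<in> I. \<V> i \<noteq> {}}"
  have "finite J"
  proof (rule ccontr)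
    assume "infinite J"
    then have "(\<Sum>\<^sub>\<infinity>i\<in>J. of_nat (card (\<V> i)) :: ennreal) = \<infinity>"
      by (rule infsum_superconst_infinite_ennreal[where b=1, rotated 2])
        (use fin in \<open>auto simp: J_def Suc_le_eq card_gt_0_iff\<close>)
    moreover have "(\<Sum>\<^sub>\<infinity>i\<in>J. of_nat (card (\<V> i)) :: ennreal) \<le> (\<Sum>\<^sub>\<infinity>i\<in>I. of_nat (card (\<V> i)))"
      by (rule infsum_mono_set_ennreal) (auto simp: J_def)
    ultimately show False
      using False by (simp add: top_unique)
  qed
  have "\<Union>(\<Union>i\<in>J. \<V> i) = (\<Union>i\<in>I. \<Union>(\<V> i))"
    unfolding J_def by auto
  then have "(\<Union>i\<in>J. \<V> i) \<in> {\<U>. finite \<U> \<and> (\<forall>U\<in>\<U>. openin X U \<and> contractible_in X U) \<and> \<Union>\<U> = topspace X}"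
    using \<open>finite J\<close> fin contr cover by (auto simp: J_def)
  then have "LS_cat X \<le> of_nat (card (\<Union>i\<in>J. \<V> i))"
    unfolding LS_cat_def by (rule INF_lower)
  also have "\<dots> \<le> of_nat (\<Sum>i\<in>J. card (\<V> i))"
    using card_UN_le[OF \<open>finite J\<close>] by (rule of_nat_mono)
  also have "\<dots> = (\<Sum>i\<in>J. of_nat (card (\<V> i)))"
    by (rule of_nat_sum)
  also have "\<dots> \<le> (\<Sum>\<^sub>\<infinity>i\<in>I. of_nat (card (\<V> i)))"
    using \<open>finite J\<close> by (rule sum_le_infsum_ennreal) (auto simp: J_def)
  finally show ?thesis .
qed simp

lemma LS_cat_le_infsum_count_sampled_endpoints:
  assumes X: "Hausdorff_space X"
    and dense: "X closure_of range e = topspace X" and e: "range e \<subseteq> topspace X"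
    and U: "\<And>U. U \<in> \<U> \<Longrightarrow> openin (prod_lam_top X \<Lambda>) U"
    and cover: "\<Union>\<U> = topspace (prod_lam_top X \<Lambda>)"
    and H: "\<And>U. U \<in> \<U> \<Longrightarrow> MT_deformation X \<Lambda> U (H U)"
    and t: "t \<in> space \<Lambda>"
  shows "LS_cat X \<le> (\<Sum>\<^sub>\<infinity>U\<in>\<U>. emeasure (count_space UNIV) (sampled_endpoints e U (H U) t))"
proof (cases "\<forall>U\<in>\<U>. finite (sampled_endpoints e U (H U) t)")
  case False
  then obtain U where "U \<in> \<U>" "infinite (sampled_endpoints e U (H U) t)"
    by blast
  then have "\<infinity> \<le> (\<Sum>\<^sub>\<infinity>U\<in>\<U>. emeasure (count_space UNIV) (sampled_endpoints e U (H U) t))"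
    using sum_le_infsum_ennreal[of "{U}" \<U> "\<lambda>U. emeasure (count_space UNIV) (sampled_endpoints e U (H U) t)"]
    by simp
  then show ?thesis
    by (simp add: top_unique)
next
  case True
  define fibre where "fibre U p = {x. (x, t) \<in> U \<and> fst (H U ((x, t), 1)) = p}" for U p
  define \<V> where "\<V> U = fibre U ` sampled_endpoints e U (H U) t" for U
  have "LS_cat X \<le> (\<Sum>\<^sub>\<infinity>U\<in>\<U>. of_nat (card (\<V> U)))"
  proof (rule LS_cat_le_infsum_card)
    show "finite (\<V> U)" if "U \<in> \<U>" for U
      using True that by (simp add: \<V>_def)
    show "openin X V \<and> contractible_in X V" if U': "U \<in> \<U>" and V: "V \<in> \<V> U" for U V
    proof -
      obtain p where p: "p \<in> sampled_endpoints e U (H U) t" "V = fibre U p"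
        using V unfolding \<V>_def by blast
      have "p \<in> topspace X"
        using sampled_endpoints_subset_topspace[OF H[OF U'] t e] p(1) by blast
      then show ?thesis
        using openin_MT_endpoint_fibre[OF X dense e H[OF U'] U[OF U'] t _ p(1)]
          contractible_in_MT_endpoint_fibre[OF H[OF U'] U[OF U'] t] True U'
        unfolding p(2) fibre_def by blast
    qed
    show "(\<Union>U\<in>\<U>. \<Union>(\<V> U)) = topspace X"
    proof (intro equalityI subsetI)
      fix x assume "x \<in> (\<Union>U\<in>\<U>. \<Union>(\<V> U))"
      then obtain U p where "U \<in> \<U>" "x \<in> fibre U p"
        unfolding \<V>_def by blast
      then show "x \<in> topspace X"
        using openin_subset[OF U] unfolding fibre_def by auto
    next
      fix x assume "x \<in> topspace X"
      then obtain U where U': "U \<in> \<U>" "(x, t) \<in> U"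
        using cover t by auto
      then have "fst (H U ((x, t), 1)) \<in> sampled_endpoints e U (H U) t"
        using MT_endpoint_in_sampled_endpoints[OF X dense e H U t] True by blast
      moreover have "x \<in> fibre U (fst (H U ((x, t), 1)))"
        using U'(2) unfolding fibre_def by simp
      ultimately show "x \<in> (\<Union>U\<in>\<U>. \<Union>(\<V> U))"
        using U'(1) unfolding \<V>_def by blast
    qed
  qed
  also have "\<dots> \<le> (\<Sum>\<^sub>\<infinity>U\<in>\<U>. emeasure (count_space UNIV) (sampled_endpoints e U (H U) t))"
  proof (rule infsum_mono)
    show "of_nat (card (\<V> U)) \<le> emeasure (count_space UNIV) (sampled_endpoints e U (H U) t)"
      if "U \<in> \<U>" for U
      using True that card_image_le[of "sampled_endpoints e U (H U) t" "fibre U"]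
      by (simp add: \<V>_def emeasure_count_space_UNIV_eq)
  qed (auto simp: nonneg_summable_on_complete)
  finally show ?thesis .
qed

lemma dense_sequence_of_second_countable:
  assumes "second_countable X" "topspace X \<noteq> {}"
  obtains e :: "nat \<Rightarrow> 'a" where "range e \<subseteq> topspace X" "X closure_of range e = topspace X"
proof -
  obtain C where C: "countable C" "C \<subseteq> topspace X" "X closure_of C = topspace X"
    using second_countable_imp_separable_space[OF assms(1)] unfolding separable_space_def by blast
  have "C \<noteq> {}"
  proof
    assume "C = {}"
    then show False
      using C(3) assms(2) by (metis closure_of_empty)
  qed
  with C show ?thesis
    using range_from_nat_into[of C] that by metis
qed

lemma LS_cat_empty:
  assumes "topspace X = {}"
  shows "LS_cat X = 0"
proof -
  have "LS_cat X \<le> of_nat (card ({} :: 'a set set))"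
    unfolding LS_cat_def using assms by (intro INF_lower) auto
  then show ?thesis
    by simp
qed

lemma LS_cat_mult_le_infsum_tau_Lambda:
  assumes X: "Hausdorff_space X" "second_countable X"
    and "countable \<U>" and U: "\<And>U. U \<in> \<U> \<Longrightarrow> meas_open X \<Lambda> U"
    and cover: "\<Union>\<U> = topspace (prod_lam_top X \<Lambda>)"
  shows "LS_cat X * emeasure \<Lambda> (space \<Lambda>) \<le> (\<Sum>\<^sub>\<infinity>U\<in>\<U>. tau_Lambda X \<Lambda> U)"
proof (cases "topspace X = {}")
  case True
  then show ?thesis
    by (simp add: LS_cat_empty)
next
  case False
  then obtain e :: "nat \<Rightarrow> 'a" where e: "range e \<subseteq> topspace X" and dense: "X closure_of range e = topspace X"
    using dense_sequence_of_second_countable[OF X(2)] by blast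
  have U_open: "openin (prod_lam_top X \<Lambda>) U" and U_sets: "U \<in> sets (prod_lam_meas X \<Lambda>)"
    if "U \<in> \<U>" for U
    using U[OF that] unfolding meas_open_def by auto
  show ?thesis
    unfolding tau_Lambda_def
  proof (rule le_infsum_INF_ennreal[where S="\<lambda>U. {H. MT_deformation X \<Lambda> U H}"
        and f="\<lambda>U H. coh_ext \<Lambda> (H ` (U \<times> {1}))", OF \<open>countable \<U>\<close>])
    fix H assume "\<And>U. U \<in> \<U> \<Longrightarrow> H U \<in> {H. MT_deformation X \<Lambda> U H}"
    then have H: "\<And>U. U \<in> \<U> \<Longrightarrow> MT_deformation X \<Lambda> U (H U)"
      by blast
    let ?count = "\<lambda>U t. emeasure (count_space UNIV) (sampled_endpoints e U (H U) t)"
    have "LS_cat X * emeasure \<Lambda> (space \<Lambda>) = (\<integral>\<^sup>+ t. LS_cat X \<partial>\<Lambda>)"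
      by simp
    also have "\<dots> \<le> (\<integral>\<^sup>+ t. (\<Sum>\<^sub>\<infinity>U\<in>\<U>. ?count U t) \<partial>\<Lambda>)"
      using LS_cat_le_infsum_count_sampled_endpoints[OF X(1) dense e U_open cover H]
      by (intro nn_integral_mono) blast
    also have "\<dots> = (\<Sum>\<^sub>\<infinity>U\<in>\<U>. (\<integral>\<^sup>+ t. ?count U t \<partial>\<Lambda>))"
      using borel_measurable_count_sampled_endpoints[OF X H U_sets e]
      by (intro nn_integral_infsum[OF \<open>countable \<U>\<close>]) blast
    also have "\<dots> \<le> (\<Sum>\<^sub>\<infinity>U\<in>\<U>. coh_ext \<Lambda> (H U ` (U \<times> {1})))"
    proof (rule infsum_mono)
      show "(\<integral>\<^sup>+ t. ?count U t \<partial>\<Lambda>) \<le> coh_ext \<Lambda> (H U ` (U \<times> {1}))" if "U \<in> \<U>" for U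
        unfolding coh_ext_def using count_sampled_endpoints_le_leaf_count[OF H U_open] that
        by (intro nn_integral_mono) blast
    qed (auto simp: nonneg_summable_on_complete)
    finally show "LS_cat X * emeasure \<Lambda> (space \<Lambda>) \<le> (\<Sum>\<^sub>\<infinity>U\<in>\<U>. coh_ext \<Lambda> (H U ` (U \<times> {1})))" .
  qed
qed

section \<open>Upper bound\<close>

lemma continuous_map_clamp_unit_interval:
  "continuous_map euclideanreal (top_of_set {0..1::real}) (\<lambda>s. max 0 (min 1 s))"
proof -
  have "continuous_map euclideanreal euclideanreal (\<lambda>s::real. max 0 (min 1 s))"
    by (intro continuous_intros)
  then show ?thesis
    by (auto simp: continuous_map_in_subtopology)
qed

lemma measurable_fst_restrict_Times:
  assumes V: "openin X V"
  shows "fst \<in> restrict_space (borel_of X \<Otimes>\<^sub>M \<Lambda>) (V \<times> space \<Lambda>) \<rightarrow>\<^sub>M borel_of (subtopology X V)"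
  unfolding borel_of_def[of "subtopology X V"]
proof (rule measurable_measure_of)
  let ?M = "restrict_space (borel_of X \<Otimes>\<^sub>M \<Lambda>) (V \<times> space \<Lambda>)"
  show "fst \<in> space ?M \<rightarrow> topspace (subtopology X V)"
    by (auto simp: space_restrict_space space_pair_measure)
  show "{U. openin (subtopology X V) U} \<subseteq> Pow (topspace (subtopology X V))"
    using openin_subset[of "subtopology X V"] by blast
  fix A assume "A \<in> {U. openin (subtopology X V) U}"
  then obtain T where T: "openin X T" "A = T \<inter> V"
    by (auto simp: openin_subtopology)
  have "(V \<times> space \<Lambda>) \<inter> space (borel_of X \<Otimes>\<^sub>M \<Lambda>) = V \<times> space \<Lambda>"
    using openin_subset[OF V] by (auto simp: space_pair_measure)
  then have VT: "(V \<times> space \<Lambda>) \<inter> space (borel_of X \<Otimes>\<^sub>M \<Lambda>) \<in> sets (borel_of X \<Otimes>\<^sub>M \<Lambda>)"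
    using V by (simp add: pair_measureI openin_in_sets_borel_of)
  have "(T \<inter> V) \<times> space \<Lambda> \<in> sets (borel_of X \<Otimes>\<^sub>M \<Lambda>)"
    using T V by (intro pair_measureI openin_in_sets_borel_of openin_Int) auto
  then have "(T \<inter> V) \<times> space \<Lambda> \<in> sets ?M"
    using sets_restrict_space_iff[OF VT] by auto
  moreover have "fst -` A \<inter> space ?M = (T \<inter> V) \<times> space \<Lambda>"
    using T openin_subset[OF V] by (auto simp: space_restrict_space space_pair_measure)
  ultimately show "fst -` A \<inter> space ?M \<in> sets ?M"
    by simp
qed

lemma MT_deformation_Times:
  assumes X: "second_countable X" and V: "openin X V"
    and g: "continuous_map (prod_topology euclideanreal (subtopology X V)) X g"
    and g0: "\<And>x. x \<in> V \<Longrightarrow> g (0, x) = x"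
  shows "MT_deformation X \<Lambda> (V \<times> space \<Lambda>) (\<lambda>((x, t), s). (g (s, x), t))"
  unfolding MT_deformation_def
proof (intro conjI ballI)
  let ?M = "restrict_space (prod_lam_meas X \<Lambda>) (V \<times> space \<Lambda>) \<Otimes>\<^sub>M borel"
  have g_meas: "g \<in> borel \<Otimes>\<^sub>M borel_of (subtopology X V) \<rightarrow>\<^sub>M borel_of X"
    using continuous_map_measurable_pair_borel_of[OF second_countable_euclidean
        second_countable_subtopology[OF X] g]
    by (simp add: borel_of_euclidean)
  have swap: "(\<lambda>z. (snd z, fst (fst z))) \<in> ?M \<rightarrow>\<^sub>M borel \<Otimes>\<^sub>M borel_of (subtopology X V)"
  proof (rule measurable_Pair)
    show "(\<lambda>z. fst (fst z)) \<in> ?M \<rightarrow>\<^sub>M borel_of (subtopology X V)"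
      using measurable_comp[OF measurable_fst measurable_fst_restrict_Times[OF V, of \<Lambda>]]
      unfolding prod_lam_meas_def by (simp add: o_def)
  qed simp
  have "(\<lambda>z. g (snd z, fst (fst z))) \<in> ?M \<rightarrow>\<^sub>M borel_of X"
    using measurable_comp[OF swap g_meas] by (simp add: o_def)
  moreover have "snd \<in> restrict_space (prod_lam_meas X \<Lambda>) (V \<times> space \<Lambda>) \<rightarrow>\<^sub>M \<Lambda>"
    unfolding prod_lam_meas_def by (rule measurable_restrict_space1) simp
  then have "(\<lambda>z. snd (fst z)) \<in> ?M \<rightarrow>\<^sub>M \<Lambda>"
    using measurable_comp[OF measurable_fst] by (simp add: o_def)
  ultimately have "(\<lambda>z. (g (snd z, fst (fst z)), snd (fst z))) \<in> ?M \<rightarrow>\<^sub>M prod_lam_meas X \<Lambda>"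
    unfolding prod_lam_meas_def by (rule measurable_Pair)
  then show "(\<lambda>((x, t), s). (g (s, x), t)) \<in> ?M \<rightarrow>\<^sub>M prod_lam_meas X \<Lambda>"
    by (simp add: case_prod_unfold)
next
  fix t assume t: "t \<in> space \<Lambda>"
  have "continuous_map (prod_topology (subtopology X V) euclideanreal)
      (prod_topology euclideanreal (subtopology X V)) (\<lambda>z. (snd z, fst z))"
    by (intro continuous_map_pairedI continuous_map_snd continuous_map_fst)
  from continuous_map_compose[OF this g]
  have "continuous_map (prod_topology (subtopology X V) euclideanreal) X (\<lambda>(x, s). g (s, x))"
    by (simp add: o_def case_prod_unfold)
  then have "continuous_map (prod_topology (subtopology X V) euclideanreal) (prod_lam_top X \<Lambda>)
      (\<lambda>z. ((\<lambda>(x, s). g (s, x)) z, t))"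
    unfolding prod_lam_top_def using t by (intro continuous_map_pairedI) auto
  moreover have "(\<lambda>z. ((\<lambda>(x, s). g (s, x)) z, t)) = (\<lambda>(x, s). (\<lambda>((x, t), s). (g (s, x), t)) ((x, t), s))"
    by (auto simp: fun_eq_iff)
  moreover have "{x. (x, t) \<in> V \<times> space \<Lambda>} = V"
    using t by auto
  ultimately show "continuous_map (prod_topology (subtopology X {x. (x, t) \<in> V \<times> space \<Lambda>}) euclideanreal)
      (prod_lam_top X \<Lambda>) (\<lambda>(x, s). (\<lambda>((x, t), s). (g (s, x), t)) ((x, t), s))"
    by simp
next
  fix p assume "p \<in> V \<times> space \<Lambda>"
  then show "(\<lambda>((x, t), s). (g (s, x), t)) (p, 0) = p"
    using g0 by auto
qed

lemma tau_Lambda_Times_le: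
  assumes X: "second_countable X" and V: "openin X V" and "contractible_in X V"
  shows "tau_Lambda X \<Lambda> (V \<times> space \<Lambda>) \<le> emeasure \<Lambda> (space \<Lambda>)"
proof -
  obtain p h where p: "p \<in> topspace X"
    and h: "continuous_map (prod_topology (top_of_set {0..1::real}) (subtopology X V)) X h"
    and h0: "\<And>x. h (0, x) = x" and h1: "\<And>x. h (1, x) = p"
    using \<open>contractible_in X V\<close> unfolding contractible_in_def homotopic_with_def by (auto simp: id_def)
  define g where "g = (\<lambda>(s, x). h (max 0 (min 1 s), x))"
  have "continuous_map (prod_topology euclideanreal (subtopology X V))
      (prod_topology (top_of_set {0..1::real}) (subtopology X V)) (\<lambda>z. (max 0 (min 1 (fst z)), snd z))"
    by (intro continuous_map_pairedI continuous_map_compose[OF continuous_map_fst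
          continuous_map_clamp_unit_interval, unfolded o_def] continuous_map_snd)
  from continuous_map_compose[OF this h]
  have g: "continuous_map (prod_topology euclideanreal (subtopology X V)) X g"
    unfolding g_def by (simp add: o_def case_prod_unfold)
  define H :: "('a \<times> 'b) \<times> real \<Rightarrow> 'a \<times> 'b" where "H = (\<lambda>((x, t), s). (g (s, x), t))"
  have H: "MT_deformation X \<Lambda> (V \<times> space \<Lambda>) H"
    unfolding H_def using h0 by (intro MT_deformation_Times[OF X V g]) (simp add: g_def)
  have "leaf_count (H ` ((V \<times> space \<Lambda>) \<times> {1})) t \<le> 1" for t
  proof -
    have "{x. (x, t) \<in> H ` ((V \<times> space \<Lambda>) \<times> {1})} \<subseteq> {p}"
      unfolding H_def g_def by (auto simp: h1)
    then show ?thesis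
      unfolding leaf_count_eq_emeasure
      using emeasure_mono[of _ "{p}" "count_space UNIV"] by (simp add: order_trans)
  qed
  then have "coh_ext \<Lambda> (H ` ((V \<times> space \<Lambda>) \<times> {1})) \<le> (\<integral>\<^sup>+ t. 1 \<partial>\<Lambda>)"
    unfolding coh_ext_def by (intro nn_integral_mono)
  moreover have "tau_Lambda X \<Lambda> (V \<times> space \<Lambda>) \<le> coh_ext \<Lambda> (H ` ((V \<times> space \<Lambda>) \<times> {1}))"
    unfolding tau_Lambda_def using H by (intro INF_lower) simp
  ultimately show ?thesis
    by simp
qed

lemma Cat_lam_le_card_mult:
  assumes X: "second_countable X" and fin: "finite \<V>"
    and \<V>: "\<And>V. V \<in> \<V> \<Longrightarrow> openin X V \<and> contractible_in X V" and cover: "\<Union>\<V> = topspace X"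
  shows "Cat_lam X \<Lambda> \<le> of_nat (card \<V>) * emeasure \<Lambda> (space \<Lambda>)"
proof -
  define \<U> where "\<U> = (\<lambda>V. V \<times> space \<Lambda>) ` \<V>"
  have "countable \<U>" "\<forall>U\<in>\<U>. meas_open X \<Lambda> U" "\<Union>\<U> = topspace (prod_lam_top X \<Lambda>)"
    unfolding \<U>_def using fin \<V> cover by (auto simp: countable_finite meas_open_Times)
  then have "Cat_lam X \<Lambda> \<le> (\<Sum>\<^sub>\<infinity>U\<in>\<U>. tau_Lambda X \<Lambda> U)"
    unfolding Cat_lam_def by (intro INF_lower) blast
  also have "\<dots> = (\<Sum>U\<in>\<U>. tau_Lambda X \<Lambda> U)"
    unfolding \<U>_def using fin by (simp add: infsum_finite)
  also have "\<dots> \<le> (\<Sum>V\<in>\<V>. tau_Lambda X \<Lambda> (V \<times> space \<Lambda>))"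
    unfolding \<U>_def using sum_image_le[OF fin, of "tau_Lambda X \<Lambda>" "\<lambda>V. V \<times> space \<Lambda>"] by (simp add: o_def)
  also have "\<dots> \<le> (\<Sum>V\<in>\<V>. emeasure \<Lambda> (space \<Lambda>))"
    using \<V> tau_Lambda_Times_le[OF X] by (intro sum_mono) blast
  finally show ?thesis
    by simp
qed

lemma MT_deformation_fst:
  assumes U: "openin (prod_lam_top X \<Lambda>) U"
  shows "MT_deformation X \<Lambda> U fst"
  unfolding MT_deformation_def
proof (intro conjI ballI)
  show "fst \<in> restrict_space (prod_lam_meas X \<Lambda>) U \<Otimes>\<^sub>M borel \<rightarrow>\<^sub>M prod_lam_meas X \<Lambda>"
    using measurable_comp[OF measurable_fst measurable_restrict_space1[OF measurable_ident]]
    by (simp add: o_def id_def)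
next
  fix t assume t: "t \<in> space \<Lambda>"
  have "continuous_map (prod_topology (subtopology X {x. (x, t) \<in> U}) euclideanreal) (prod_lam_top X \<Lambda>)
      (\<lambda>z. (fst z, t))"
    unfolding prod_lam_top_def using t
    by (intro continuous_map_pairedI continuous_map_compose[OF continuous_map_fst continuous_map_id_subt,
          unfolded o_def id_def]) auto
  moreover have eq: "(\<lambda>(x, s). fst ((x, t), s)) = (\<lambda>z. (fst z, t))"
    by (auto simp: fun_eq_iff)
  ultimately show "continuous_map (prod_topology (subtopology X {x. (x, t) \<in> U}) euclideanreal)
      (prod_lam_top X \<Lambda>) (\<lambda>(x, s). fst ((x, t), s))"
    by (simp only: eq)
qed simp

lemma Cat_lam_null:
  assumes "emeasure \<Lambda> (space \<Lambda>) = 0"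
  shows "Cat_lam X \<Lambda> = 0"
proof -
  define W where "W = topspace X \<times> space \<Lambda>"
  have W: "openin (prod_lam_top X \<Lambda>) W"
    unfolding W_def by (simp add: prod_lam_top_def openin_prod_Times_iff openin_discrete_topology)
  have "Cat_lam X \<Lambda> \<le> (\<Sum>\<^sub>\<infinity>U\<in>{W}. tau_Lambda X \<Lambda> U)"
    unfolding Cat_lam_def by (rule INF_lower) (auto simp: W_def meas_open_Times)
  also have "\<dots> = tau_Lambda X \<Lambda> W"
    by simp
  also have "\<dots> \<le> coh_ext \<Lambda> (fst ` (W \<times> {1::real}))"
    unfolding tau_Lambda_def
    by (rule INF_lower[where f="\<lambda>H. coh_ext \<Lambda> (H ` (W \<times> {1}))"]) (simp add: MT_deformation_fst[OF W])
  also have "\<dots> \<le> (\<integral>\<^sup>+ t. \<top> \<partial>\<Lambda>)"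
    unfolding coh_ext_def by (rule nn_integral_mono) simp
  also have "\<dots> = 0"
    using assms by simp
  finally show ?thesis
    by simp
qed

lemma LS_cat_attained:
  assumes "LS_cat X \<noteq> \<top>"
  obtains \<V> where "finite \<V>" "\<And>V. V \<in> \<V> \<Longrightarrow> openin X V \<and> contractible_in X V"
    "\<Union>\<V> = topspace X" "LS_cat X = of_nat (card \<V>)"
proof -
  define \<C> where "\<C> = {\<U>. finite \<U> \<and> (\<forall>U\<in>\<U>. openin X U \<and> contractible_in X U) \<and> \<Union>\<U> = topspace X}"
  have LS: "LS_cat X = (INF \<U>\<in>\<C>. of_nat (card \<U>))"
    unfolding LS_cat_def \<C>_def ..
  obtain \<V>\<^sub>0 where "\<V>\<^sub>0 \<in> \<C>"
    using assms unfolding LS by fastforce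
  then obtain \<V> where \<V>: "\<V> \<in> \<C>" and least: "\<And>\<U>. \<U> \<in> \<C> \<Longrightarrow> card \<V> \<le> card \<U>"
    using ex_has_least_nat[of "\<lambda>\<U>. \<U> \<in> \<C>" \<V>\<^sub>0 card] by blast
  have "LS_cat X = of_nat (card \<V>)"
    unfolding LS using \<V> least by (intro antisym INF_lower INF_greatest) auto
  moreover have "finite \<V>" "\<And>V. V \<in> \<V> \<Longrightarrow> openin X V \<and> contractible_in X V" "\<Union>\<V> = topspace X"
    using \<V> unfolding \<C>_def by auto
  ultimately show ?thesis
    using that by blast
qed

lemma Cat_lam_le_LS_cat_mult:
  assumes "second_countable X"
  shows "Cat_lam X \<Lambda> \<le> LS_cat X * emeasure \<Lambda> (space \<Lambda>)"
proof (cases "emeasure \<Lambda> (space \<Lambda>) = 0")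
  case True
  then show ?thesis
    by (simp add: Cat_lam_null)
next
  case False
  show ?thesis
  proof (cases "LS_cat X = \<top>")
    case True
    then show ?thesis
      using False by (simp add: ennreal_top_mult)
  next
    case False
    then obtain \<V> where "finite \<V>" "\<And>V. V \<in> \<V> \<Longrightarrow> openin X V \<and> contractible_in X V"
      "\<Union>\<V> = topspace X" "LS_cat X = of_nat (card \<V>)"
      using LS_cat_attained[of X] by blast
    then show ?thesis
      using Cat_lam_le_card_mult[OF assms] by metis
  qed
qed

theorem mainTheorem18:
  fixes X :: "'a topology" and \<Lambda> :: "'b measure"
  assumes "manifold X"
    and "standard_borel \<Lambda>"
    and "sigma_finite_measure \<Lambda>"
  shows "Cat_lam X \<Lambda> = LS_cat X * emeasure \<Lambda> (space \<Lambda>)"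
proof (rule antisym)
  have X: "Hausdorff_space X" "second_countable X"
    using \<open>manifold X\<close> unfolding manifold_def by blast+
  then show "Cat_lam X \<Lambda> \<le> LS_cat X * emeasure \<Lambda> (space \<Lambda>)"
    by (intro Cat_lam_le_LS_cat_mult)
  show "LS_cat X * emeasure \<Lambda> (space \<Lambda>) \<le> Cat_lam X \<Lambda>"
    unfolding Cat_lam_def using LS_cat_mult_le_infsum_tau_Lambda[OF X] by (intro INF_greatest) blast
qed

end
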